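(* Let $u>0$, $\Delta x>0$, and let $\varphi:\mathbb R\to\mathbb R$ satisfy $0\le\varphi(r)\le 1$ for all $r$ (for instance the Minmod limiter $\varphi(r)=\mathrm{minmod}(1,r)$). Let $t\mapsto c(t)=(c_j(t))_{j\in\mathbb Z}$ be a $C^1$ map from an interval $I\subset\mathbb R$ into $\ell^2(\mathbb Z)$ satisfying, for all $t\in I$ and $j\in\mathbb Z$, $$\frac{d}{dt}c_j(t)+u\,\frac{c_{j+\frac12}(t)-c_{j-\frac12}(t)}{\Delta x}=0,\qquad c_{j+\frac12}=c_j+\tfrac12(c_{j+1}-c_j)\,\varphi_{j+\frac12},$$ where $\varphi_{j+\frac12}=\varphi\!\left(\frac{c_j-c_{j-1}}{c_{j+1}-c_j}\right)$ if $c_{j+1}\ne c_j$ and $\varphi_{j+\frac12}$ is an arbitrary number in $[0,1]$ if $c_{j+1}=c_j$. Then for all $t\in I$, $$\frac{\Delta x}{2}\frac{d}{dt}\sum_{j\in\mathbb Z}|c_j(t)|^2=-\frac u2\sum_{j\in\mathbb Z}|c_j(t)-c_{j-1}(t)|^2\bigl(1-\varphi_{j-\frac12}(t)\bigr)\le 0 ,$$ so in particular $t\mapsto\sum_j|c_j(t)|^2$ is non-increasing.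
   Context: The function $\mathrm{minmod}:\mathbb R^2\to\mathbb R$ is defined by $\mathrm{minmod}(a,b)=0$ if $ab\le 0$, $\mathrm{minmod}(a,b)=\min(a,b)$ if $a,b>0$, and $\mathrm{minmod}(a,b)=\max(a,b)$ if $a,b<0$. *)

theory Defs
  imports "HOL-Analysis.Analysis"
begin

definition minmod :: "real \<Rightarrow> real \<Rightarrow> real" where
  "minmod a b = (if a * b \<le> 0 then 0 else if a > 0 then min a b else max a b)"

definition l2 :: "(int \<Rightarrow> real) \<Rightarrow> bool" where
  "l2 x \<longleftrightarrow> (\<lambda>j. (x j)^2) summable_on UNIV"

definition l2norm :: "(int \<Rightarrow> real) \<Rightarrow> real" where
  "l2norm x = sqrt (\<Sum>\<^sub>\<infinity>j. (x j)^2)"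

definition l2_C1_on :: "real set \<Rightarrow> (real \<Rightarrow> int \<Rightarrow> real) \<Rightarrow> bool" where
  "l2_C1_on I c \<longleftrightarrow> (\<exists>c'.
     (\<forall>t\<in>I. l2 (c t) \<and> l2 (c' t)) \<and>
     (\<forall>t\<in>I. ((\<lambda>s. l2norm (\<lambda>j. c s j - c t j - (s - t) * c' t j) / \<bar>s - t\<bar>)
              \<longlongrightarrow> 0) (at t within I)) \<and>
     (\<forall>t\<in>I. ((\<lambda>s. l2norm (\<lambda>j. c' s j - c' t j)) \<longlongrightarrow> 0) (at t within I)))"

end

theory Submission
  imports Defs
begin

text \<open>
  Frechet differentiability in l2 gives d/dt sum_j c_j^2 = 2 sum_j c_j c_j', and the scheme
  gives c_j' = -u/dx (F_j - F_{j-1}) with the face values F_j = c_{j+1/2}. Summation by parts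
  rests on the pointwise identity c_j (F_j - F_{j-1}) = g_{j+1} + H_{j+1} - H_j, where
  H_j = c_j F_{j-1} - c_j^2/2 and g_j = (c_j - c_{j-1})^2 (1 - phi_{j-1/2}) / 2 >= 0:
  since H is summable its telescoping sum vanishes, leaving only the dissipation.
  The mean value theorem turns the sign of the derivative into monotonicity.
\<close>

lemma summable_on_diff:
  fixes f g :: "'a \<Rightarrow> real"
  assumes "f summable_on A" "g summable_on A"
  shows "(\<lambda>x. f x - g x) summable_on A"
  using summable_on_add[OF assms(1) summable_on_uminus[THEN iffD2, OF assms(2)]] by simp

lemma infsum_diff:
  fixes f g :: "'a \<Rightarrow> real"
  assumes "f summable_on A" "g summable_on A"
  shows "(\<Sum>\<^sub>\<infinity>x\<in>A. f x - g x) = (\<Sum>\<^sub>\<infinity>x\<in>A. f x) - (\<Sum>\<^sub>\<infinity>x\<in>A. g x)"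
  using infsum_add[OF assms(1) summable_on_uminus[THEN iffD2, OF assms(2)]] infsum_uminus[of g A]
  by simp

lemma summable_on_shift_int: "(\<lambda>j::int. f (j + k)) summable_on UNIV \<longleftrightarrow> f summable_on UNIV"
  by (rule summable_on_reindex_bij_betw) (rule bij_betwI[where g="\<lambda>j. j - k"], auto)

lemma infsum_shift_int: "(\<Sum>\<^sub>\<infinity>j::int. f (j + k)) = (\<Sum>\<^sub>\<infinity>j. f j)"
  by (rule infsum_reindex_bij_betw) (rule bij_betwI[where g="\<lambda>j. j - k"], auto)

lemma infsum_telescope_int:
  fixes H :: "int \<Rightarrow> real"
  assumes "H summable_on UNIV"
  shows "(\<Sum>\<^sub>\<infinity>j. H (j + 1) - H j) = 0"
  using infsum_diff[OF summable_on_shift_int[THEN iffD2, OF assms] assms] infsum_shift_int[of H 1]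
  by simp

lemma l2_add:
  assumes "l2 x" "l2 y"
  shows "l2 (\<lambda>j. x j + y j)"
  unfolding l2_def
proof (rule summable_on_comparison_test)
  show "(\<lambda>j. 2 * (x j)^2 + 2 * (y j)^2) summable_on UNIV"
    using assms unfolding l2_def by (intro summable_on_add summable_on_cmult_right)
  show "(x j + y j)^2 \<le> 2 * (x j)^2 + 2 * (y j)^2" for j
    using sum_squares_bound[of "x j - y j" 0] by (simp add: power2_eq_square algebra_simps)
qed simp

lemma l2_cmult:
  assumes "l2 x"
  shows "l2 (\<lambda>j. a * x j)"
  using summable_on_cmult_right[of "\<lambda>j. (x j)^2" UNIV "a^2"] assms
  unfolding l2_def by (simp add: power_mult_distrib)

lemma l2_diff:
  assumes "l2 x" "l2 y"
  shows "l2 (\<lambda>j. x j - y j)"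
  using l2_add[OF assms(1) l2_cmult[OF assms(2), of "-1"]] by simp

lemma l2_shift:
  assumes "l2 x"
  shows "l2 (\<lambda>j. x (j + k))"
  using assms summable_on_shift_int[of "\<lambda>j. (x j)^2" k] unfolding l2_def by simp

lemma l2_mult_bounded:
  assumes "l2 x" "\<And>j. \<bar>a j\<bar> \<le> 1"
  shows "l2 (\<lambda>j. a j * x j)"
  unfolding l2_def
proof (rule summable_on_comparison_test)
  show "(\<lambda>j. (x j)^2) summable_on UNIV"
    using assms(1) unfolding l2_def .
  show "(a j * x j)^2 \<le> (x j)^2" for j
    using assms(2)[of j] by (simp add: power_mult_distrib abs_square_le_1 mult_left_le_one_le)
qed simp

lemma summable_on_l2_mult:
  assumes "l2 x" "l2 y"
  shows "(\<lambda>j. x j * y j) summable_on UNIV"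
proof -
  have "(\<lambda>j. norm (x j * y j)) summable_on UNIV"
  proof (rule summable_on_comparison_test)
    show "(\<lambda>j. (x j)^2 + (y j)^2) summable_on UNIV"
      using assms unfolding l2_def by (intro summable_on_add)
    show "norm (x j * y j) \<le> (x j)^2 + (y j)^2" for j
    proof -
      have "2 * (\<bar>x j\<bar> * \<bar>y j\<bar>) \<le> (x j)^2 + (y j)^2"
        using sum_squares_bound[of "\<bar>x j\<bar>" "\<bar>y j\<bar>"] by simp
      moreover have "0 \<le> \<bar>x j\<bar> * \<bar>y j\<bar>"
        by simp
      ultimately show ?thesis
        unfolding real_norm_def abs_mult by linarith
    qed
  qed simp
  then show ?thesis
    by (rule summable_on_iff_abs_summable_on_real[THEN iffD2])
qed

lemma l2norm_sq: "(l2norm x)^2 = (\<Sum>\<^sub>\<infinity>j. (x j)^2)"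
  unfolding l2norm_def by (simp add: infsum_nonneg)

lemma L2_set_le_l2norm:
  assumes "l2 x" "finite F"
  shows "L2_set x F \<le> l2norm x"
  unfolding L2_set_def l2norm_def
  using assms unfolding l2_def by (intro real_sqrt_le_mono finite_sum_le_infsum) auto

lemma abs_le_l2norm:
  assumes "l2 x"
  shows "\<bar>x j\<bar> \<le> l2norm x"
  using L2_set_le_l2norm[OF assms, of "{j}"] by simp

lemma l2_Cauchy_Schwarz:
  assumes "l2 x" "l2 y"
  shows "\<bar>\<Sum>\<^sub>\<infinity>j. x j * y j\<bar> \<le> l2norm x * l2norm y"
proof -
  have abs_summable: "(\<lambda>j. norm (x j * y j)) summable_on UNIV"
    using summable_on_l2_mult[OF assms] by (rule summable_on_iff_abs_summable_on_real[THEN iffD1])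
  have "\<bar>\<Sum>\<^sub>\<infinity>j. x j * y j\<bar> \<le> (\<Sum>\<^sub>\<infinity>j. norm (x j * y j))"
    using norm_infsum_bound[OF abs_summable] by simp
  also have "\<dots> \<le> l2norm x * l2norm y"
  proof (rule infsum_le_finite_sums[OF abs_summable])
    fix F :: "int set"
    assume F: "finite F"
    have "sum (\<lambda>j. norm (x j * y j)) F = (\<Sum>j\<in>F. \<bar>x j\<bar> * \<bar>y j\<bar>)"
      by (simp add: abs_mult)
    also have "\<dots> \<le> L2_set x F * L2_set y F"
      by (rule L2_set_mult_ineq)
    also have "\<dots> \<le> l2norm x * l2norm y"
      using F assms by (intro mult_mono L2_set_le_l2norm) (auto simp: l2norm_def infsum_nonneg)
    finally show "sum (\<lambda>j. norm (x j * y j)) F \<le> l2norm x * l2norm y" .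
  qed
  finally show ?thesis .
qed

lemma l2_sq_expansion:
  assumes x: "l2 x" and y: "l2 y" and v: "l2 v"
  shows "(\<Sum>\<^sub>\<infinity>j. (y j)^2) - (\<Sum>\<^sub>\<infinity>j. (x j)^2) - \<delta> * (2 * (\<Sum>\<^sub>\<infinity>j. x j * v j))
       = (\<Sum>\<^sub>\<infinity>j. (y j - x j)^2) + 2 * (\<Sum>\<^sub>\<infinity>j. x j * (y j - x j - \<delta> * v j))"
proof -
  have sq: "(\<lambda>j. (x j)^2) summable_on UNIV" "(\<lambda>j. (y j)^2) summable_on UNIV"
    "(\<lambda>j. (y j - x j)^2) summable_on UNIV"
    using x y l2_diff[OF y x] unfolding l2_def by auto
  have xv: "(\<lambda>j. x j * v j) summable_on UNIV"
    using x v by (rule summable_on_l2_mult)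
  have xr: "(\<lambda>j. x j * (y j - x j - \<delta> * v j)) summable_on UNIV"
    using x y v by (intro summable_on_l2_mult l2_diff l2_cmult)
  have "(\<Sum>\<^sub>\<infinity>j. (y j)^2) - (\<Sum>\<^sub>\<infinity>j. (x j)^2) - \<delta> * (2 * (\<Sum>\<^sub>\<infinity>j. x j * v j))
      = (\<Sum>\<^sub>\<infinity>j. (y j)^2 - (x j)^2 - 2 * \<delta> * (x j * v j))"
    using sq xv by (simp add: infsum_diff summable_on_diff summable_on_cmult_right infsum_cmult_right)
  also have "\<dots> = (\<Sum>\<^sub>\<infinity>j. (y j - x j)^2 + 2 * (x j * (y j - x j - \<delta> * v j)))"
    by (intro infsum_cong) (simp add: algebra_simps power2_eq_square)
  also have "\<dots> = (\<Sum>\<^sub>\<infinity>j. (y j - x j)^2) + 2 * (\<Sum>\<^sub>\<infinity>j. x j * (y j - x j - \<delta> * v j))"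
    using sq xr by (simp add: infsum_add summable_on_cmult_right infsum_cmult_right)
  finally show ?thesis .
qed

lemma l2_sq_remainder_bound:
  fixes x y v :: "int \<Rightarrow> real" and \<delta> :: real
  assumes x: "l2 x" and y: "l2 y" and v: "l2 v"
  defines "r \<equiv> \<lambda>j. y j - x j - \<delta> * v j"
  shows "\<bar>(\<Sum>\<^sub>\<infinity>j. (y j)^2) - (\<Sum>\<^sub>\<infinity>j. (x j)^2) - \<delta> * (2 * (\<Sum>\<^sub>\<infinity>j. x j * v j))\<bar>
       \<le> 2 * (l2norm r)^2 + 2 * \<delta>^2 * (l2norm v)^2 + 2 * (l2norm x * l2norm r)"
proof -
  have r: "l2 r"
    unfolding r_def using x y v by (intro l2_diff l2_cmult)
  have "(\<Sum>\<^sub>\<infinity>j. (y j - x j)^2) \<le> (\<Sum>\<^sub>\<infinity>j. 2 * (r j)^2 + 2 * \<delta>^2 * (v j)^2)"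
  proof (rule infsum_mono)
    show "(\<lambda>j. (y j - x j)^2) summable_on UNIV"
      using l2_diff[OF y x] unfolding l2_def .
    show "(\<lambda>j. 2 * (r j)^2 + 2 * \<delta>^2 * (v j)^2) summable_on UNIV"
      using r v unfolding l2_def by (intro summable_on_add summable_on_cmult_right)
    show "(y j - x j)^2 \<le> 2 * (r j)^2 + 2 * \<delta>^2 * (v j)^2" for j
      using sum_squares_bound[of "r j - \<delta> * v j" 0]
      by (simp add: r_def power2_eq_square algebra_simps)
  qed
  also have "\<dots> = 2 * (l2norm r)^2 + 2 * \<delta>^2 * (l2norm v)^2"
    using r v unfolding l2_def l2norm_sq
    by (simp add: infsum_add summable_on_cmult_right infsum_cmult_right)
  finally have "(\<Sum>\<^sub>\<infinity>j. (y j - x j)^2) \<le> 2 * (l2norm r)^2 + 2 * \<delta>^2 * (l2norm v)^2" .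
  moreover have "0 \<le> (\<Sum>\<^sub>\<infinity>j. (y j - x j)^2)"
    by (simp add: infsum_nonneg)
  moreover have "\<bar>\<Sum>\<^sub>\<infinity>j. x j * r j\<bar> \<le> l2norm x * l2norm r"
    using x r by (rule l2_Cauchy_Schwarz)
  ultimately show ?thesis
    unfolding l2_sq_expansion[OF x y v] r_def by linarith
qed

lemma has_real_derivative_l2_sq_frechet:
  assumes l2c: "\<And>s. s \<in> I \<Longrightarrow> l2 (c s)" and t: "t \<in> I" and v: "l2 v"
    and frechet: "((\<lambda>s. l2norm (\<lambda>j. c s j - c t j - (s - t) * v j) / \<bar>s - t\<bar>) \<longlongrightarrow> 0) (at t within I)"
  shows "((\<lambda>s. \<Sum>\<^sub>\<infinity>j. (c s j)^2) has_real_derivative 2 * (\<Sum>\<^sub>\<infinity>j. c t j * v j)) (at t within I)"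
proof -
  define f where "f s = (\<Sum>\<^sub>\<infinity>j. (c s j)^2)" for s
  define D where "D = 2 * (\<Sum>\<^sub>\<infinity>j. c t j * v j)"
  define e where "e s = l2norm (\<lambda>j. c s j - c t j - (s - t) * v j) / \<bar>s - t\<bar>" for s
  define B where "B s = 2 * (e s)^2 * \<bar>s - t\<bar> + 2 * \<bar>s - t\<bar> * (l2norm v)^2 + 2 * l2norm (c t) * e s"
    for s
  have "\<bar>(f s - f t) / (s - t) - D\<bar> \<le> B s" if s: "s \<in> I" "s \<noteq> t" for s
  proof -
    define \<rho> where "\<rho> = l2norm (\<lambda>j. c s j - c t j - (s - t) * v j)"
    have "a * (2 * (\<rho> / a)^2 * a + 2 * a * V + 2 * X * (\<rho> / a)) = 2 * \<rho>^2 + 2 * a^2 * V + 2 * (X * \<rho>)"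
      if "a > 0" for a V X :: real
      using that by (simp add: field_simps power2_eq_square)
    from this[of "\<bar>s - t\<bar>"] s(2)
    have "\<bar>s - t\<bar> * B s = 2 * \<rho>^2 + 2 * \<bar>s - t\<bar>^2 * (l2norm v)^2 + 2 * (l2norm (c t) * \<rho>)"
      unfolding B_def e_def \<rho>_def by simp
    then have "\<bar>f s - f t - (s - t) * D\<bar> \<le> \<bar>s - t\<bar> * B s"
      using l2_sq_remainder_bound[OF l2c[OF t] l2c[OF s(1)] v, of "s - t"]
      by (simp add: f_def D_def \<rho>_def)
    moreover have "(f s - f t) / (s - t) - D = (f s - f t - (s - t) * D) / (s - t)"
      using s(2) by (simp add: field_simps)
    ultimately show ?thesis
      using s(2) by (simp add: abs_divide divide_le_eq mult.commute)
  qed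
  then have "eventually (\<lambda>s. norm ((f s - f t) / (s - t) - D) \<le> B s) (at t within I)"
    unfolding eventually_at_filter by (intro always_eventually) auto
  moreover have "(B \<longlongrightarrow> 0) (at t within I)"
  proof -
    have "(B \<longlongrightarrow> 2 * 0^2 * \<bar>t - t\<bar> + 2 * \<bar>t - t\<bar> * (l2norm v)^2 + 2 * l2norm (c t) * 0)
        (at t within I)"
      unfolding B_def using frechet unfolding e_def[abs_def] by (intro tendsto_intros)
    then show ?thesis by simp
  qed
  ultimately have "((\<lambda>s. (f s - f t) / (s - t) - D) \<longlongrightarrow> 0) (at t within I)"
    by (rule Lim_null_comparison)
  then show ?thesis
    unfolding f_def[abs_def, symmetric] D_def[symmetric] has_field_derivative_iff
    by (rule LIM_zero_cancel)
qed

lemma has_real_derivative_coordinate_frechet: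
  assumes l2c: "\<And>s. s \<in> I \<Longrightarrow> l2 (c s)" and t: "t \<in> I" and v: "l2 v"
    and frechet: "((\<lambda>s. l2norm (\<lambda>j. c s j - c t j - (s - t) * v j) / \<bar>s - t\<bar>) \<longlongrightarrow> 0) (at t within I)"
  shows "((\<lambda>s. c s j) has_real_derivative v j) (at t within I)"
proof -
  have "\<bar>(c s j - c t j) / (s - t) - v j\<bar> \<le> l2norm (\<lambda>j. c s j - c t j - (s - t) * v j) / \<bar>s - t\<bar>"
    if s: "s \<in> I" "s \<noteq> t" for s
  proof -
    have "(c s j - c t j) / (s - t) - v j = (c s j - c t j - (s - t) * v j) / (s - t)"
      using s(2) by (simp add: field_simps)
    moreover have "\<bar>c s j - c t j - (s - t) * v j\<bar> \<le> l2norm (\<lambda>j. c s j - c t j - (s - t) * v j)"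
      using l2c[OF s(1)] l2c[OF t] v by (intro abs_le_l2norm l2_diff l2_cmult)
    ultimately show ?thesis
      by (simp add: abs_divide divide_right_mono)
  qed
  then have "eventually (\<lambda>s. norm ((c s j - c t j) / (s - t) - v j)
      \<le> l2norm (\<lambda>j. c s j - c t j - (s - t) * v j) / \<bar>s - t\<bar>) (at t within I)"
    unfolding eventually_at_filter by (intro always_eventually) auto
  from Lim_null_comparison[OF this frechet] show ?thesis
    unfolding has_field_derivative_iff by (rule LIM_zero_cancel)
qed

lemma has_real_derivative_l2_sq:
  assumes l2c: "\<And>s. s \<in> I \<Longrightarrow> l2 (c s)" and t: "t \<in> I" and v: "l2 v"
    and frechet: "((\<lambda>s. l2norm (\<lambda>j. c s j - c t j - (s - t) * v j) / \<bar>s - t\<bar>) \<longlongrightarrow> 0) (at t within I)"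
    and coordinate: "\<And>j. ((\<lambda>s. c s j) has_real_derivative w j) (at t within I)"
  shows "((\<lambda>s. \<Sum>\<^sub>\<infinity>j. (c s j)^2) has_real_derivative 2 * (\<Sum>\<^sub>\<infinity>j. c t j * w j)) (at t within I)"
proof (cases "at t within I = bot")
  case True
  \<comment> \<open>\<open>t\<close> is isolated in \<open>I\<close>, so every number is a derivative there\<close>
  then show ?thesis
    by (simp add: has_field_derivative_iff)
next
  case False
  then have "w = v"
    using has_field_derivative_unique[OF coordinate has_real_derivative_coordinate_frechet[OF assms(1-4)]]
    by blast
  then show ?thesis
    using has_real_derivative_l2_sq_frechet[OF assms(1-4)] by simp
qed

text \<open>The reconstructed value c_{j+1/2}: the argument j stands for the face j + 1/2.\<close>
definition limited_face_value :: "(int \<Rightarrow> real) \<Rightarrow> (int \<Rightarrow> real) \<Rightarrow> int \<Rightarrow> real" where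
  "limited_face_value c \<psi> j = c j + (c (j + 1) - c j) * \<psi> j / 2"

lemma l2_limited_face_value:
  assumes "l2 c" "\<And>j. 0 \<le> \<psi> j \<and> \<psi> j \<le> 1"
  shows "l2 (limited_face_value c \<psi>)"
proof -
  have "l2 (\<lambda>j. (\<psi> j / 2) * (c (j + 1) - c j))"
    using assms by (intro l2_mult_bounded l2_diff l2_shift[OF assms(1)])
      (auto simp: abs_le_iff intro: order_trans[of _ 1 2])
  from l2_add[OF assms(1) this] show ?thesis
    unfolding limited_face_value_def by (simp add: algebra_simps diff_divide_distrib)
qed

lemma summable_on_limiter_dissipation:
  assumes "l2 c" "\<And>j. 0 \<le> \<psi> j \<and> \<psi> j \<le> 1"
  shows "(\<lambda>j. (c j - c (j - 1))^2 * (1 - \<psi> (j - 1))) summable_on UNIV"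
proof (rule summable_on_comparison_test)
  show "(\<lambda>j. (c j - c (j - 1))^2) summable_on UNIV"
    using l2_diff[OF assms(1) l2_shift[OF assms(1), of "-1"]] unfolding l2_def by simp
  show "(c j - c (j - 1))^2 * (1 - \<psi> (j - 1)) \<le> (c j - c (j - 1))^2" for j
    using assms(2)[of "j - 1"] by (intro mult_left_le) auto
  show "0 \<le> (c j - c (j - 1))^2 * (1 - \<psi> (j - 1))" for j
    using assms(2)[of "j - 1"] by simp
qed

lemma limited_face_value_summation_by_parts:
  assumes c: "l2 c" and \<psi>: "\<And>j. 0 \<le> \<psi> j \<and> \<psi> j \<le> 1"
  defines "F \<equiv> limited_face_value c \<psi>"
  shows "(\<Sum>\<^sub>\<infinity>j. c j * (F j - F (j - 1))) = (\<Sum>\<^sub>\<infinity>j. (c j - c (j - 1))^2 * (1 - \<psi> (j - 1))) / 2"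
proof -
  define g where "g j = (c j - c (j - 1))^2 * (1 - \<psi> (j - 1)) / 2" for j
  define H where "H j = c j * F (j - 1) - (c j)^2 / 2" for j
  have dissipation: "(\<lambda>j. (c j - c (j - 1))^2 * (1 - \<psi> (j - 1))) summable_on UNIV"
    using c \<psi> by (rule summable_on_limiter_dissipation)
  then have g: "g summable_on UNIV"
    unfolding g_def using summable_on_cmult_left[OF dissipation, of "1/2"] by simp
  have F: "l2 F"
    unfolding F_def using c \<psi> by (rule l2_limited_face_value)
  have H: "H summable_on UNIV"
  proof -
    have "(\<lambda>j. c j * F (j - 1)) summable_on UNIV"
      using summable_on_l2_mult[OF c l2_shift[OF F, of "-1"]] by simp
    moreover have "(\<lambda>j. (c j)^2 / 2) summable_on UNIV"
      using summable_on_cmult_left[of "\<lambda>j. (c j)^2" UNIV "1/2"] c unfolding l2_def by simp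
    ultimately show ?thesis
      unfolding H_def by (rule summable_on_diff)
  qed
  have "c j * (F j - F (j - 1)) = g (j + 1) + (H (j + 1) - H j)" for j
    by (simp add: g_def H_def F_def limited_face_value_def field_simps power2_eq_square)
  moreover have "(\<lambda>j. g (j + 1)) summable_on UNIV"
    using g by (rule summable_on_shift_int[THEN iffD2])
  moreover have "(\<lambda>j. H (j + 1) - H j) summable_on UNIV"
    using summable_on_shift_int[THEN iffD2, OF H] H by (rule summable_on_diff)
  ultimately have "(\<Sum>\<^sub>\<infinity>j. c j * (F j - F (j - 1))) = (\<Sum>\<^sub>\<infinity>j. g (j + 1)) + (\<Sum>\<^sub>\<infinity>j. H (j + 1) - H j)"
    by (simp only: infsum_add)
  also have "\<dots> = (\<Sum>\<^sub>\<infinity>j. g j)"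
    using infsum_shift_int[of g 1] infsum_telescope_int[OF H] by simp
  also have "\<dots> = (\<Sum>\<^sub>\<infinity>j. (c j - c (j - 1))^2 * (1 - \<psi> (j - 1))) / 2"
    unfolding g_def using infsum_cmult_left[OF dissipation, of "1/2"] by simp
  finally show ?thesis .
qed

lemma has_real_derivative_energy_limited_scheme:
  fixes c :: "real \<Rightarrow> int \<Rightarrow> real" and \<psi> :: "int \<Rightarrow> real" and a :: real
  assumes c: "l2_C1_on I c" and t: "t \<in> I" and \<psi>: "\<And>j. 0 \<le> \<psi> j \<and> \<psi> j \<le> 1"
    and scheme: "\<And>j. ((\<lambda>s. c s j) has_real_derivative
      a * (limited_face_value (c t) \<psi> j - limited_face_value (c t) \<psi> (j - 1))) (at t within I)"
  shows "((\<lambda>s. \<Sum>\<^sub>\<infinity>j. (c s j)^2) has_real_derivative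
    a * (\<Sum>\<^sub>\<infinity>j. (c t j - c t (j - 1))^2 * (1 - \<psi> (j - 1)))) (at t within I)"
proof -
  define F where "F = limited_face_value (c t) \<psi>"
  obtain c' where l2c: "\<And>s. s \<in> I \<Longrightarrow> l2 (c s) \<and> l2 (c' s)"
    and frechet: "((\<lambda>s. l2norm (\<lambda>j. c s j - c t j - (s - t) * c' t j) / \<bar>s - t\<bar>) \<longlongrightarrow> 0) (at t within I)"
    using c t unfolding l2_C1_on_def by blast
  have "((\<lambda>s. \<Sum>\<^sub>\<infinity>j. (c s j)^2) has_real_derivative
      2 * (\<Sum>\<^sub>\<infinity>j. c t j * (a * (F j - F (j - 1))))) (at t within I)"
    using l2c t frechet scheme unfolding F_def by (intro has_real_derivative_l2_sq) auto
  moreover have "(\<Sum>\<^sub>\<infinity>j. c t j * (a * (F j - F (j - 1)))) = a * (\<Sum>\<^sub>\<infinity>j. c t j * (F j - F (j - 1)))"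
    unfolding infsum_cmult_right'[symmetric] by (simp only: mult.left_commute)
  moreover have "(\<Sum>\<^sub>\<infinity>j. c t j * (F j - F (j - 1)))
      = (\<Sum>\<^sub>\<infinity>j. (c t j - c t (j - 1))^2 * (1 - \<psi> (j - 1))) / 2"
    unfolding F_def using l2c[OF t] \<psi> by (intro limited_face_value_summation_by_parts) auto
  ultimately show ?thesis
    by simp
qed

lemma deriv_nonpos_imp_antitone_on_interval:
  fixes f f' :: "real \<Rightarrow> real"
  assumes "is_interval I"
    and deriv: "\<And>x. x \<in> I \<Longrightarrow> (f has_real_derivative f' x) (at x within I)"
    and nonpos: "\<And>x. x \<in> I \<Longrightarrow> f' x \<le> 0"
    and "s \<in> I" "t \<in> I" "s \<le> t"
  shows "f t \<le> f s"
proof -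
  have sub: "{s..t} \<subseteq> I"
    using assms(1,4,5) unfolding is_interval_1 by (meson atLeastAtMost_iff subsetI)
  have "(f has_derivative (*) (f' x)) (at x within {s..t})" if "x \<in> {s..t}" for x
    using has_field_derivative_subset[OF deriv[OF subsetD[OF sub that]] sub]
    unfolding has_field_derivative_def .
  then obtain x where x: "x \<in> {s..t}" and mvt: "f t - f s = f' x * (t - s)"
    using mvt_very_simple[of s t f "\<lambda>x. (*) (f' x)"] \<open>s \<le> t\<close> by auto
  have "f' x * (t - s) \<le> 0"
    using nonpos[of x] x sub \<open>s \<le> t\<close> by (intro mult_nonpos_nonneg) auto
  with mvt show ?thesis
    by linarith
qed

theorem mainTheorem2:
  fixes u dx :: real and \<phi> :: "real \<Rightarrow> real" and I :: "real set"
    and c :: "real \<Rightarrow> int \<Rightarrow> real" and \<psi> :: "real \<Rightarrow> int \<Rightarrow> real"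
  assumes u_pos: "u > 0" and dx_pos: "dx > 0"
    and phi_bounds: "\<And>r. 0 \<le> \<phi> r \<and> \<phi> r \<le> 1"
    and I_interval: "is_interval I"
    and c_C1: "l2_C1_on I c"
    and psi_neq: "\<And>t j. t \<in> I \<Longrightarrow> c t (j + 1) \<noteq> c t j \<Longrightarrow>
                     \<psi> t j = \<phi> ((c t j - c t (j - 1)) / (c t (j + 1) - c t j))"
    and psi_eq: "\<And>t j. t \<in> I \<Longrightarrow> c t (j + 1) = c t j \<Longrightarrow> 0 \<le> \<psi> t j \<and> \<psi> t j \<le> 1"
    and ode: "\<And>t j. t \<in> I \<Longrightarrow>
       ((\<lambda>s. c s j) has_real_derivative
          (- u * ((c t j + (c t (j + 1) - c t j) * \<psi> t j / 2)
                  - (c t (j - 1) + (c t j - c t (j - 1)) * \<psi> t (j - 1) / 2)) / dx))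
       (at t within I)"
  shows "(\<forall>t\<in>I. (\<lambda>j. (c t j - c t (j - 1))^2 * (1 - \<psi> t (j - 1))) summable_on UNIV \<and>
           (\<exists>D. ((\<lambda>s. \<Sum>\<^sub>\<infinity>j. \<bar>c s j\<bar>^2) has_real_derivative D) (at t within I) \<and>
                dx / 2 * D = - u / 2 * (\<Sum>\<^sub>\<infinity>j. \<bar>c t j - c t (j - 1)\<bar>^2 * (1 - \<psi> t (j - 1))) \<and>
                - u / 2 * (\<Sum>\<^sub>\<infinity>j. \<bar>c t j - c t (j - 1)\<bar>^2 * (1 - \<psi> t (j - 1))) \<le> 0)) \<and>
         (\<forall>s\<in>I. \<forall>t\<in>I. s \<le> t \<longrightarrow> (\<Sum>\<^sub>\<infinity>j. \<bar>c t j\<bar>^2) \<le> (\<Sum>\<^sub>\<infinity>j. \<bar>c s j\<bar>^2))"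
proof -
  have \<psi>_bounds: "0 \<le> \<psi> t j \<and> \<psi> t j \<le> 1" if "t \<in> I" for t j
    using psi_neq[OF that, of j] psi_eq[OF that, of j] phi_bounds by (cases "c t (j + 1) = c t j") auto
  define dissipation where
    "dissipation t = (\<Sum>\<^sub>\<infinity>j. (c t j - c t (j - 1))^2 * (1 - \<psi> t (j - 1)))" for t
  have dissipation_nonneg: "0 \<le> dissipation t" if "t \<in> I" for t
    unfolding dissipation_def using \<psi>_bounds[OF that] by (intro infsum_nonneg) simp
  have energy_deriv: "((\<lambda>s. \<Sum>\<^sub>\<infinity>j. \<bar>c s j\<bar>^2) has_real_derivative - u / dx * dissipation t)
      (at t within I)" if t: "t \<in> I" for t
  proof -
    have "((\<lambda>s. c s j) has_real_derivative - u / dx *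
        (limited_face_value (c t) (\<psi> t) j - limited_face_value (c t) (\<psi> t) (j - 1))) (at t within I)" for j
      using ode[OF t, of j] by (simp add: limited_face_value_def)
    from has_real_derivative_energy_limited_scheme[OF c_C1 t \<psi>_bounds[OF t] this] show ?thesis
      by (simp add: dissipation_def)
  qed
  show ?thesis
  proof (intro conjI ballI impI)
    fix t assume t: "t \<in> I"
    show "(\<lambda>j. (c t j - c t (j - 1))^2 * (1 - \<psi> t (j - 1))) summable_on UNIV"
      using c_C1 t \<psi>_bounds[OF t] unfolding l2_C1_on_def by (intro summable_on_limiter_dissipation) auto
    show "\<exists>D. ((\<lambda>s. \<Sum>\<^sub>\<infinity>j. \<bar>c s j\<bar>^2) has_real_derivative D) (at t within I) \<and>
        dx / 2 * D = - u / 2 * (\<Sum>\<^sub>\<infinity>j. \<bar>c t j - c t (j - 1)\<bar>^2 * (1 - \<psi> t (j - 1))) \<and>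
        - u / 2 * (\<Sum>\<^sub>\<infinity>j. \<bar>c t j - c t (j - 1)\<bar>^2 * (1 - \<psi> t (j - 1))) \<le> 0"
      using energy_deriv[OF t] dissipation_nonneg[OF t] u_pos dx_pos
      by (intro exI[of _ "- u / dx * dissipation t"]) (simp add: dissipation_def)
  next
    fix s t assume "s \<in> I" "t \<in> I" "s \<le> t"
    moreover have "- u / dx * dissipation x \<le> 0" if "x \<in> I" for x
      using dissipation_nonneg[OF that] u_pos dx_pos by (intro mult_nonpos_nonneg) auto
    ultimately show "(\<Sum>\<^sub>\<infinity>j. \<bar>c t j\<bar>^2) \<le> (\<Sum>\<^sub>\<infinity>j. \<bar>c s j\<bar>^2)"
      using deriv_nonpos_imp_antitone_on_interval[OF I_interval energy_deriv] by blast
  qed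
qed

end
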